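(* Consider the constraint system obtained from (ILP-1) by replacing, in the flow constraints, the one-to-many flows indexed by $b\in\texttt{src}$ with many-to-one flows indexed by $b\in\texttt{snk}$: for all $b\in\texttt{snk}$, $s\in S$, $t$: $F^b_{st}=-\sum_{r\in\texttt{src}}z_{rs0}$ if $t=0$, $F^b_{st}=|\texttt{src}|\,z_{bsT}$ if $t=T$, and $F^b_{st}=0$ otherwise (with the bridge constraints now imposed for $b\in\texttt{snk}$). For any feasible point of this system, defining $s^r_t$ as the unique state with $z_{rs^r_tt}=1$ and $\pi^r=s^r_0\cdots s^r_T$, the $\pi^r$ are mobility paths and for every $i\in\texttt{src}$ and $j\in\texttt{snk}$ there exists an agent-to-agent information path $\bar\pi^{i,j}$ valid with respect to $\{\pi^r\}$.
   Context: A mobility-communication network is $\mathcal N=(S,\rightarrow,\rightsquigarrow)$ with $S$ finite, $\rightarrow\subseteq S\times S$ directed mobility edges, $\rightsquigarrow\subseteq S\times S$ directed communication edges; $C^\mp_\rightarrow(s)$, $C^\mp_\rightsquigarrow(s)$ denote predecessor/successor sets along the respective edges. There are $R$ agents with initial states $s^r_0$, horizon $T\ge1$, and $\texttt{src},\texttt{snk}\subseteq\{1,\dots,R\}$. A mobility path is $s_0\cdots s_T$ with $(s_t,s_{t+1})\in\rightarrow$. An information path is $\mathfrak s^0_0\cdots\mathfrak s^{n_0}_0\mathfrak s^0_1\cdots\mathfrak s^{n_T}_T$ with $(\mathfrak s^i_t,\mathfrak s^{i+1}_t)\in\rightsquigarrow$ for $i<n_t$ and $(\mathfrak s^{n_t}_t,\mathfrak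 s^0_{t+1})\in\rightarrow$ for $t<T$; an agent-to-agent information path $\bar\pi^{i,j}$ starts at $s^i_0$ and ends at $s^j_T$. It is valid w.r.t. mobility paths $\{\pi^r=s^r_0\cdots s^r_T\}$ if $\{\mathfrak s^i_t\}_{i\le n_t}\subseteq\{s^r_t\}_r$ for all $t$ and $(\mathfrak s^{n_t}_t,\mathfrak s^0_{t+1})\in\{(s^r_t,s^r_{t+1})\}_r$ for all $t<T$. Variables: binary $z_{rst}$ ($0\le t\le T$), $x_{rss't}$ ($(s,s')\in\rightarrow$, $t<T$); nonnegative integer $f^b_{ss't}$ ($(s,s')\in\rightarrow$, $t<T$), $\bar f^b_{ss't}$ ($(s,s')\in\rightsquigarrow$, $t\le T$). $F^b_{st}=\sum_{s'\in C^-_\rightarrow(s)}f^b_{s's(t-1)}+\sum_{s'\in C^-_\rightsquigarrow(s)}\bar f^b_{s'st}-\sum_{s'\in C^+_\rightarrow(s)}f^b_{ss't}-\sum_{s'\in C^+_\rightsquigarrow(s)}\bar f^b_{ss't}$ (terms with time $-1$ or mobility time $T$ omitted). With a constant $N\ge R$, the remaining constraints are: $z_{rs0}=1$ iff $s=s^r_0$; $z_{rs(t+1)}=\sum_{s'\in C^-_\rightarrow(s)}x_{rs'st}$ and $z_{rst}=\sum_{s'\in C^+_\rightarrow(s)}x_{rss't}$ for $t<T$; $\bar f^b_{ss't}\le N\sum_rz_{rst}$, $\bar f^b_{ss't}\le N\sum_rz_{rs't}$, $f^b_{ss't}\le N\sum_rx_{rss't}$ for every flow index $b$. *)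

theory Defs
  imports Main
begin

definition C_minus :: "('s \<times> 's) set \<Rightarrow> 's \<Rightarrow> 's set" where
  "C_minus E s = {s'. (s', s) \<in> E}"

definition C_plus :: "('s \<times> 's) set \<Rightarrow> 's \<Rightarrow> 's set" where
  "C_plus E s = {s'. (s, s') \<in> E}"

definition network_wf ::
  "'s set \<Rightarrow> ('s \<times> 's) set \<Rightarrow> ('s \<times> 's) set \<Rightarrow> nat \<Rightarrow> (nat \<Rightarrow> 's) \<Rightarrow> nat \<Rightarrow> nat set \<Rightarrow> nat set \<Rightarrow> bool" where
  "network_wf S mob com R s0 T src snk \<longleftrightarrow>
     finite S \<and> mob \<subseteq> S \<times> S \<and> com \<subseteq> S \<times> S \<and>
     (\<forall>r\<in>{1..R}. s0 r \<in> S) \<and> T \<ge> 1 \<and> src \<subseteq> {1..R} \<and> snk \<subseteq> {1..R}"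

text \<open>Terms with time -1 or mobility time T are omitted.\<close>
definition Fnet ::
  "('s \<times> 's) set \<Rightarrow> ('s \<times> 's) set \<Rightarrow> nat \<Rightarrow> ('s \<Rightarrow> 's \<Rightarrow> nat \<Rightarrow> int) \<Rightarrow> ('s \<Rightarrow> 's \<Rightarrow> nat \<Rightarrow> int)
     \<Rightarrow> 's \<Rightarrow> nat \<Rightarrow> int" where
  "Fnet mob com T f fb s t =
     (if t \<ge> 1 then (\<Sum>s'\<in>C_minus mob s. f s' s (t - 1)) else 0)
     + (\<Sum>s'\<in>C_minus com s. fb s' s t)
     - (if t < T then (\<Sum>s'\<in>C_plus mob s. f s s' t) else 0)
     - (\<Sum>s'\<in>C_plus com s. fb s s' t)"

definition ILP_snk_feasible ::
  "'s set \<Rightarrow> ('s \<times> 's) set \<Rightarrow> ('s \<times> 's) set \<Rightarrow> nat \<Rightarrow> (nat \<Rightarrow> 's) \<Rightarrow> nat \<Rightarrow> nat set \<Rightarrow> nat set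
   \<Rightarrow> nat
   \<Rightarrow> (nat \<Rightarrow> 's \<Rightarrow> nat \<Rightarrow> int) \<Rightarrow> (nat \<Rightarrow> 's \<Rightarrow> 's \<Rightarrow> nat \<Rightarrow> int)
   \<Rightarrow> (nat \<Rightarrow> 's \<Rightarrow> 's \<Rightarrow> nat \<Rightarrow> int) \<Rightarrow> (nat \<Rightarrow> 's \<Rightarrow> 's \<Rightarrow> nat \<Rightarrow> int) \<Rightarrow> bool" where
  "ILP_snk_feasible S mob com R s0 T src snk N z x f fb \<longleftrightarrow>
     \<comment> \<open>domains: binary z, x; nonnegative integer flows\<close>
     (\<forall>r\<in>{1..R}. \<forall>s\<in>S. \<forall>t\<le>T. z r s t \<in> {0, 1}) \<and>
     (\<forall>r\<in>{1..R}. \<forall>(s, s')\<in>mob. \<forall>t<T. x r s s' t \<in> {0, 1}) \<and>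
     (\<forall>b\<in>snk. \<forall>(s, s')\<in>mob. \<forall>t<T. f b s s' t \<ge> 0) \<and>
     (\<forall>b\<in>snk. \<forall>(s, s')\<in>com. \<forall>t\<le>T. fb b s s' t \<ge> 0) \<and>
     \<comment> \<open>initial positions\<close>
     (\<forall>r\<in>{1..R}. \<forall>s\<in>S. z r s 0 = 1 \<longleftrightarrow> s = s0 r) \<and>
     \<comment> \<open>mobility conservation\<close>
     (\<forall>r\<in>{1..R}. \<forall>s\<in>S. \<forall>t<T.
        z r s (Suc t) = (\<Sum>s'\<in>C_minus mob s. x r s' s t) \<and>
        z r s t = (\<Sum>s'\<in>C_plus mob s. x r s s' t)) \<and>
     \<comment> \<open>bridge constraints\<close>
     (\<forall>b\<in>snk. \<forall>(s, s')\<in>com. \<forall>t\<le>T.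
        fb b s s' t \<le> int N * (\<Sum>r\<in>{1..R}. z r s t) \<and>
        fb b s s' t \<le> int N * (\<Sum>r\<in>{1..R}. z r s' t)) \<and>
     (\<forall>b\<in>snk. \<forall>(s, s')\<in>mob. \<forall>t<T.
        f b s s' t \<le> int N * (\<Sum>r\<in>{1..R}. x r s s' t)) \<and>
     \<comment> \<open>many-to-one flow constraints\<close>
     (\<forall>b\<in>snk. \<forall>s\<in>S. \<forall>t\<le>T.
        Fnet mob com T (f b) (fb b) s t =
          (if t = 0 then - (\<Sum>r\<in>src. z r s 0)
           else if t = T then int (card src) * z b s T
           else 0))"

definition state_of :: "'s set \<Rightarrow> (nat \<Rightarrow> 's \<Rightarrow> nat \<Rightarrow> int) \<Rightarrow> nat \<Rightarrow> nat \<Rightarrow> 's" where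
  "state_of S z r t = (THE s. s \<in> S \<and> z r s t = 1)"

definition mobility_path :: "'s set \<Rightarrow> ('s \<times> 's) set \<Rightarrow> nat \<Rightarrow> (nat \<Rightarrow> 's) \<Rightarrow> bool" where
  "mobility_path S mob T p \<longleftrightarrow> (\<forall>t\<le>T. p t \<in> S) \<and> (\<forall>t<T. (p t, p (Suc t)) \<in> mob)"

text \<open>An information path: for each t \<le> T a nonempty block ip t = [s^0_t, ..., s^{n_t}_t]
  of communication steps, blocks joined by mobility edges.\<close>
definition info_path ::
  "'s set \<Rightarrow> ('s \<times> 's) set \<Rightarrow> ('s \<times> 's) set \<Rightarrow> nat \<Rightarrow> (nat \<Rightarrow> 's list) \<Rightarrow> bool" where
  "info_path S mob com T ip \<longleftrightarrow>
     (\<forall>t\<le>T. ip t \<noteq> [] \<and> set (ip t) \<subseteq> S \<and>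
        (\<forall>i. Suc i < length (ip t) \<longrightarrow> (ip t ! i, ip t ! Suc i) \<in> com)) \<and>
     (\<forall>t<T. (last (ip t), hd (ip (Suc t))) \<in> mob)"

definition agent_info_path ::
  "'s set \<Rightarrow> ('s \<times> 's) set \<Rightarrow> ('s \<times> 's) set \<Rightarrow> nat \<Rightarrow> (nat \<Rightarrow> nat \<Rightarrow> 's) \<Rightarrow> nat \<Rightarrow> nat
   \<Rightarrow> (nat \<Rightarrow> 's list) \<Rightarrow> bool" where
  "agent_info_path S mob com T p i j ip \<longleftrightarrow>
     info_path S mob com T ip \<and> hd (ip 0) = p i 0 \<and> last (ip T) = p j T"

definition valid_info_path :: "nat \<Rightarrow> nat \<Rightarrow> (nat \<Rightarrow> nat \<Rightarrow> 's) \<Rightarrow> (nat \<Rightarrow> 's list) \<Rightarrow> bool" where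
  "valid_info_path R T p ip \<longleftrightarrow>
     (\<forall>t\<le>T. set (ip t) \<subseteq> {p r t | r. r \<in> {1..R}}) \<and>
     (\<forall>t<T. (last (ip t), hd (ip (Suc t))) \<in> {(p r t, p r (Suc t)) | r. r \<in> {1..R}})"

end

theory Submission
  imports Defs
begin

text \<open>Fix \<open>i \<in> src\<close> and \<open>j \<in> snk\<close>, and consider the states of the time-expanded network that
  are reachable from agent \<open>i\<close>'s initial state by a valid prefix of an information path. The
  bridge constraints put an agent at the head of every communication edge and an agent along
  every mobility edge carrying positive flow \<open>j\<close>, so positive flow never leaves the reachable
  set, and summation by parts shows that the net inflow of flow \<open>j\<close> into it is nonnegative.
  The only demand of flow \<open>j\<close> is at agent \<open>j\<close>'s final state, while agent \<open>i\<close>'s initial state is a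
  strict source; so if agent \<open>j\<close>'s final state were unreachable the net inflow would be
  negative.\<close>

lemma pos_sum_imp_pos_term:
  fixes g :: "'a \<Rightarrow> int"
  assumes "0 < sum g A"
  obtains a where "a \<in> A" and "0 < g a"
  using assms sum_nonpos[of A g] by force

lemma pos_le_mult_sum_imp_pos_term:
  fixes g :: "'a \<Rightarrow> int"
  assumes "0 < c" and "c \<le> int N * sum g A"
  obtains a where "a \<in> A" and "0 < g a"
proof (rule pos_sum_imp_pos_term)
  show "0 < sum g A"
    using assms zero_less_mult_iff[of "int N" "sum g A"] by simp
qed

lemma sum_le_member_nonpos:
  fixes g :: "'a \<Rightarrow> int"
  assumes "finite A" "a \<in> A" "\<And>y. y \<in> A \<Longrightarrow> g y \<le> 0"
  shows "sum g A \<le> g a"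
  using member_le_sum[of a A "\<lambda>y. - g y"] assms by (simp add: sum_negf)

lemma sum_binary_eq_1_imp_ex1:
  fixes g :: "'a \<Rightarrow> int"
  assumes "finite S" and "\<And>s. s \<in> S \<Longrightarrow> g s \<in> {0, 1}" and "sum g S = 1"
  shows "\<exists>!s. s \<in> S \<and> g s = 1"
proof -
  have "\<exists>s\<in>S. g s \<noteq> 0"
    using assms(3) sum.neutral[of S g] by (metis zero_neq_one)
  moreover have "a = b" if "a \<in> S" "b \<in> S" "g a = 1" "g b = 1" for a b
  proof (rule ccontr)
    assume "a \<noteq> b"
    then have "sum g {a, b} = 2"
      using that by simp
    moreover have "sum g {a, b} \<le> sum g S"
      using assms(1) that by (intro sum_mono2) (auto dest: assms(2))
    ultimately show False
      using assms(3) by simp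
  qed
  ultimately show ?thesis
    using assms(2) by blast
qed

lemma of_bool_diff_mult_nonneg:
  fixes c :: int
  assumes "0 \<le> c" and "P \<Longrightarrow> 0 < c \<Longrightarrow> Q"
  shows "0 \<le> (of_bool Q - of_bool P) * c"
  using assms by (cases P; cases Q) (auto simp: le_less)

lemma sum_C_minus_eq_sum_edges:
  assumes "finite S" "E \<subseteq> S \<times> S"
  shows "(\<Sum>s\<in>S. \<Sum>s'\<in>C_minus E s. h s' s) = (\<Sum>(u, v)\<in>E. h u v)"
proof -
  have "\<forall>s\<in>S. finite (C_minus E s)"
    using assms by (auto simp: C_minus_def intro: finite_subset[of _ S])
  then have "(\<Sum>s\<in>S. \<Sum>s'\<in>C_minus E s. h s' s) = (\<Sum>(s, s')\<in>Sigma S (C_minus E). h s' s)"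
    using sum.Sigma[OF assms(1)] by simp
  also have "Sigma S (C_minus E) = prod.swap ` E"
    using assms(2) by (force simp: C_minus_def)
  also have "(\<Sum>(s, s')\<in>prod.swap ` E. h s' s) = (\<Sum>(u, v)\<in>E. h u v)"
    by (simp add: sum.reindex case_prod_beta comp_def)
  finally show ?thesis .
qed

lemma sum_C_plus_eq_sum_edges:
  assumes "finite S" "E \<subseteq> S \<times> S"
  shows "(\<Sum>s\<in>S. \<Sum>s'\<in>C_plus E s. h s s') = (\<Sum>(u, v)\<in>E. h u v)"
proof -
  have "\<forall>s\<in>S. finite (C_plus E s)"
    using assms by (auto simp: C_plus_def intro: finite_subset[of _ S])
  then have "(\<Sum>s\<in>S. \<Sum>s'\<in>C_plus E s. h s s') = (\<Sum>(s, s')\<in>Sigma S (C_plus E). h s s')"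
    using sum.Sigma[OF assms(1)] by simp
  also have "Sigma S (C_plus E) = E"
    using assms(2) by (auto simp: C_plus_def)
  finally show ?thesis .
qed

lemma sum_inflow_eq_sum_outflow:
  assumes "finite S" "E \<subseteq> S \<times> S"
  shows "(\<Sum>s\<in>S. \<Sum>s'\<in>C_minus E s. h s' s) = (\<Sum>s\<in>S. \<Sum>s'\<in>C_plus E s. h s s')"
  by (simp only: sum_C_minus_eq_sum_edges[OF assms] sum_C_plus_eq_sum_edges[OF assms])

lemma sum_weighted_Fnet_at:
  fixes a :: "'s \<Rightarrow> int"
  assumes S: "finite S" and mob: "mob \<subseteq> S \<times> S" and com: "com \<subseteq> S \<times> S"
  shows "(\<Sum>s\<in>S. a s * Fnet mob com T f fb s t) =
      (if 1 \<le> t then \<Sum>(u, v)\<in>mob. a v * f u v (t - 1) else 0)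
    + (\<Sum>(u, v)\<in>com. (a v - a u) * fb u v t)
    - (if t < T then \<Sum>(u, v)\<in>mob. a u * f u v t else 0)"
proof -
  have "(\<Sum>s\<in>S. a s * Fnet mob com T f fb s t) =
      (if 1 \<le> t then \<Sum>s\<in>S. \<Sum>s'\<in>C_minus mob s. a s * f s' s (t - 1) else 0)
    + (\<Sum>s\<in>S. \<Sum>s'\<in>C_minus com s. a s * fb s' s t)
    - (if t < T then \<Sum>s\<in>S. \<Sum>s'\<in>C_plus mob s. a s * f s s' t else 0)
    - (\<Sum>s\<in>S. \<Sum>s'\<in>C_plus com s. a s * fb s s' t)"
    by (simp add: Fnet_def algebra_simps sum.distrib sum_subtractf sum_distrib_left)
  also have "\<dots> = (if 1 \<le> t then \<Sum>(u, v)\<in>mob. a v * f u v (t - 1) else 0)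
    + (\<Sum>(u, v)\<in>com. a v * fb u v t)
    - (if t < T then \<Sum>(u, v)\<in>mob. a u * f u v t else 0)
    - (\<Sum>(u, v)\<in>com. a u * fb u v t)"
    by (simp only: sum_C_minus_eq_sum_edges[OF S mob] sum_C_minus_eq_sum_edges[OF S com]
        sum_C_plus_eq_sum_edges[OF S mob] sum_C_plus_eq_sum_edges[OF S com])
  also have "\<dots> = (if 1 \<le> t then \<Sum>(u, v)\<in>mob. a v * f u v (t - 1) else 0)
    + (\<Sum>(u, v)\<in>com. (a v - a u) * fb u v t)
    - (if t < T then \<Sum>(u, v)\<in>mob. a u * f u v t else 0)"
    by (simp add: sum_subtractf[symmetric] case_prod_beta left_diff_distrib)
  finally show ?thesis .
qed

lemma sum_weighted_Fnet:
  fixes a :: "'s \<Rightarrow> nat \<Rightarrow> int"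
  assumes "finite S" "mob \<subseteq> S \<times> S" "com \<subseteq> S \<times> S"
  shows "(\<Sum>t\<le>T. \<Sum>s\<in>S. a s t * Fnet mob com T f fb s t) =
      (\<Sum>t<T. \<Sum>(u, v)\<in>mob. (a v (Suc t) - a u t) * f u v t)
    + (\<Sum>t\<le>T. \<Sum>(u, v)\<in>com. (a v t - a u t) * fb u v t)"
proof -
  define inflow where "inflow t = (\<Sum>(u, v)\<in>mob. a v (Suc t) * f u v t)" for t
  define outflow where "outflow t = (\<Sum>(u, v)\<in>mob. a u t * f u v t)" for t
  define comm where "comm t = (\<Sum>(u, v)\<in>com. (a v t - a u t) * fb u v t)" for t
  have "(\<Sum>s\<in>S. a s t * Fnet mob com T f fb s t) =
      (if 1 \<le> t then inflow (t - 1) else 0) + comm t - (if t < T then outflow t else 0)" for t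
    using sum_weighted_Fnet_at[OF assms, of "\<lambda>s. a s t" T f fb t]
    by (cases t) (simp_all add: inflow_def outflow_def comm_def)
  then have "(\<Sum>t\<le>T. \<Sum>s\<in>S. a s t * Fnet mob com T f fb s t) =
      (\<Sum>t\<le>T. if 1 \<le> t then inflow (t - 1) else 0) + (\<Sum>t\<le>T. comm t)
    - (\<Sum>t\<le>T. if t < T then outflow t else 0)"
    by (simp add: sum.distrib sum_subtractf)
  also have "(\<Sum>t\<le>T. if 1 \<le> t then inflow (t - 1) else 0) = (\<Sum>t<T. inflow t)"
    by (cases T) (simp_all del: sum.atMost_Suc add: sum.atMost_Suc_shift lessThan_Suc_atMost)
  also have "(\<Sum>t\<le>T. if t < T then outflow t else 0) = (\<Sum>t<T. outflow t)"
    by (simp add: lessThan_Suc_atMost[symmetric] sum.lessThan_Suc)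
  finally show ?thesis
    by (simp add: inflow_def outflow_def comm_def sum_subtractf[symmetric] case_prod_beta
        left_diff_distrib)
qed

lemma sum_Fnet_closed_set_nonneg:
  fixes G :: "'s \<Rightarrow> nat \<Rightarrow> bool"
  assumes "finite S" "mob \<subseteq> S \<times> S" "com \<subseteq> S \<times> S"
    and "\<And>u v t. (u, v) \<in> mob \<Longrightarrow> t < T \<Longrightarrow> 0 \<le> f u v t"
    and "\<And>u v t. (u, v) \<in> com \<Longrightarrow> t \<le> T \<Longrightarrow> 0 \<le> fb u v t"
    and "\<And>u v t. G u t \<Longrightarrow> (u, v) \<in> mob \<Longrightarrow> t < T \<Longrightarrow> 0 < f u v t \<Longrightarrow> G v (Suc t)"
    and "\<And>u v t. G u t \<Longrightarrow> (u, v) \<in> com \<Longrightarrow> t \<le> T \<Longrightarrow> 0 < fb u v t \<Longrightarrow> G v t"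
  shows "0 \<le> (\<Sum>t\<le>T. \<Sum>s\<in>S. of_bool (G s t) * Fnet mob com T f fb s t)"
  unfolding sum_weighted_Fnet[OF assms(1-3)] using assms(4-)
  by (intro add_nonneg_nonneg sum_nonneg) (auto intro!: of_bool_diff_mult_nonneg)

text \<open>With \<open>A t = S\<close> and \<open>B t = mob\<close> this is
  \<open>info_path\<close>; validity is the choice of the agents' positions and moves for \<open>A\<close> and \<open>B\<close>.\<close>
definition info_prefix ::
  "('s \<times> 's) set \<Rightarrow> (nat \<Rightarrow> 's set) \<Rightarrow> (nat \<Rightarrow> ('s \<times> 's) set) \<Rightarrow> nat \<Rightarrow> (nat \<Rightarrow> 's list)
   \<Rightarrow> bool" where
  "info_prefix com A B t ip \<longleftrightarrow>
     (\<forall>t'\<le>t. ip t' \<noteq> [] \<and> set (ip t') \<subseteq> A t' \<and> successively (\<lambda>u v. (u, v) \<in> com) (ip t')) \<and>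
     (\<forall>t'<t. (last (ip t'), hd (ip (Suc t'))) \<in> B t')"

definition info_reachable ::
  "('s \<times> 's) set \<Rightarrow> (nat \<Rightarrow> 's set) \<Rightarrow> (nat \<Rightarrow> ('s \<times> 's) set) \<Rightarrow> 's \<Rightarrow> nat \<Rightarrow> 's \<Rightarrow> bool"
  where
  "info_reachable com A B s0 t s \<longleftrightarrow>
     (\<exists>ip. info_prefix com A B t ip \<and> hd (ip 0) = s0 \<and> last (ip t) = s)"

lemma info_reachable_start:
  assumes "s0 \<in> A 0"
  shows "info_reachable com A B s0 0 s0"
  unfolding info_reachable_def info_prefix_def
  using assms by (intro exI[of _ "\<lambda>_. [s0]"]) auto

lemma info_reachable_com_step:
  assumes "info_reachable com A B s0 t s" and "(s, s') \<in> com" and "s' \<in> A t"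
  shows "info_reachable com A B s0 t s'"
proof -
  obtain ip where ip: "info_prefix com A B t ip" "hd (ip 0) = s0" "last (ip t) = s"
    using assms(1) unfolding info_reachable_def by blast
  have "ip t \<noteq> []"
    using ip(1) unfolding info_prefix_def by blast
  then have "info_prefix com A B t (ip(t := ip t @ [s']))"
    using ip assms(2,3) unfolding info_prefix_def
    by (auto simp: successively_append_iff hd_append)
  moreover have "hd ((ip(t := ip t @ [s'])) 0) = s0"
    using ip(2) \<open>ip t \<noteq> []\<close> by (cases "t = 0") (simp_all add: hd_append)
  ultimately show ?thesis
    unfolding info_reachable_def by (intro exI[of _ "ip(t := ip t @ [s'])"]) simp
qed

lemma info_reachable_mob_step:
  assumes "info_reachable com A B s0 t s" and "(s, s') \<in> B t" and "s' \<in> A (Suc t)"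
  shows "info_reachable com A B s0 (Suc t) s'"
proof -
  obtain ip where ip: "info_prefix com A B t ip" "hd (ip 0) = s0" "last (ip t) = s"
    using assms(1) unfolding info_reachable_def by blast
  have "info_prefix com A B (Suc t) (ip(Suc t := [s']))"
    using ip assms(2,3) unfolding info_prefix_def by (auto simp: le_Suc_eq less_Suc_eq)
  then show ?thesis
    using ip(2) unfolding info_reachable_def by (intro exI[of _ "ip(Suc t := [s'])"]) simp
qed

lemma info_prefix_imp_info_path:
  assumes "info_prefix com A B T ip"
    and "\<And>t. t \<le> T \<Longrightarrow> A t \<subseteq> S" and "\<And>t. t < T \<Longrightarrow> B t \<subseteq> mob"
  shows "info_path S mob com T ip"
  using assms unfolding info_prefix_def info_path_def successively_conv_nth by blast

locale ILP_snk_solution =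
  fixes S :: "'s set" and mob com :: "('s \<times> 's) set" and R T N :: nat
    and s0 :: "nat \<Rightarrow> 's" and src snk :: "nat set"
    and z :: "nat \<Rightarrow> 's \<Rightarrow> nat \<Rightarrow> int" and x :: "nat \<Rightarrow> 's \<Rightarrow> 's \<Rightarrow> nat \<Rightarrow> int"
    and f fb :: "nat \<Rightarrow> 's \<Rightarrow> 's \<Rightarrow> nat \<Rightarrow> int"
  assumes network: "network_wf S mob com R s0 T src snk"
    and feasible: "ILP_snk_feasible S mob com R s0 T src snk N z x f fb"
begin

lemma finite_S: "finite S"
  and mob_subset: "mob \<subseteq> S \<times> S"
  and com_subset: "com \<subseteq> S \<times> S"
  and initial_in_S: "r \<in> {1..R} \<Longrightarrow> s0 r \<in> S"
  and src_subset: "src \<subseteq> {1..R}"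
  and snk_subset: "snk \<subseteq> {1..R}"
  using network unfolding network_wf_def by auto

lemma z_binary: "r \<in> {1..R} \<Longrightarrow> s \<in> S \<Longrightarrow> t \<le> T \<Longrightarrow> z r s t \<in> {0, 1}"
  and x_binary: "r \<in> {1..R} \<Longrightarrow> (s, s') \<in> mob \<Longrightarrow> t < T \<Longrightarrow> x r s s' t \<in> {0, 1}"
  and f_nonneg: "b \<in> snk \<Longrightarrow> (s, s') \<in> mob \<Longrightarrow> t < T \<Longrightarrow> 0 \<le> f b s s' t"
  and fb_nonneg: "b \<in> snk \<Longrightarrow> (s, s') \<in> com \<Longrightarrow> t \<le> T \<Longrightarrow> 0 \<le> fb b s s' t"
  and z_initial: "r \<in> {1..R} \<Longrightarrow> s \<in> S \<Longrightarrow> z r s 0 = 1 \<longleftrightarrow> s = s0 r"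
  and z_inflow: "r \<in> {1..R} \<Longrightarrow> s \<in> S \<Longrightarrow> t < T \<Longrightarrow>
      z r s (Suc t) = (\<Sum>s'\<in>C_minus mob s. x r s' s t)"
  and z_outflow: "r \<in> {1..R} \<Longrightarrow> s \<in> S \<Longrightarrow> t < T \<Longrightarrow>
      z r s t = (\<Sum>s'\<in>C_plus mob s. x r s s' t)"
  and fb_bridge: "b \<in> snk \<Longrightarrow> (s, s') \<in> com \<Longrightarrow> t \<le> T \<Longrightarrow>
      fb b s s' t \<le> int N * (\<Sum>r\<in>{1..R}. z r s' t)"
  and f_bridge: "b \<in> snk \<Longrightarrow> (s, s') \<in> mob \<Longrightarrow> t < T \<Longrightarrow>
      f b s s' t \<le> int N * (\<Sum>r\<in>{1..R}. x r s s' t)"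
  and flow_balance: "b \<in> snk \<Longrightarrow> s \<in> S \<Longrightarrow> t \<le> T \<Longrightarrow>
      Fnet mob com T (f b) (fb b) s t =
        (if t = 0 then - (\<Sum>r\<in>src. z r s 0) else if t = T then int (card src) * z b s T else 0)"
  using feasible unfolding ILP_snk_feasible_def by fast+

lemma sum_z_eq_1:
  assumes "r \<in> {1..R}" and "t \<le> T"
  shows "(\<Sum>s\<in>S. z r s t) = 1"
  using assms(2)
proof (induction t)
  case 0
  have "(\<Sum>s\<in>S. z r s 0) = (\<Sum>s\<in>S. if s = s0 r then 1 else 0)"
    using z_initial z_binary assms(1) by (intro sum.cong) force+
  then show ?case
    using initial_in_S[OF assms(1)] finite_S by simp
next
  case (Suc t)
  have "(\<Sum>s\<in>S. z r s (Suc t)) = (\<Sum>s\<in>S. \<Sum>s'\<in>C_minus mob s. x r s' s t)"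
    using z_inflow assms(1) Suc.prems by simp
  also have "\<dots> = (\<Sum>s\<in>S. \<Sum>s'\<in>C_plus mob s. x r s s' t)"
    by (rule sum_inflow_eq_sum_outflow[OF finite_S mob_subset])
  also have "\<dots> = (\<Sum>s\<in>S. z r s t)"
    using z_outflow assms(1) Suc.prems by simp
  finally show ?case
    using Suc by simp
qed

lemma z_nonneg: "r \<in> {1..R} \<Longrightarrow> s \<in> S \<Longrightarrow> t \<le> T \<Longrightarrow> 0 \<le> z r s t"
  using z_binary by fastforce

lemma x_nonneg: "r \<in> {1..R} \<Longrightarrow> (s, s') \<in> mob \<Longrightarrow> t < T \<Longrightarrow> 0 \<le> x r s s' t"
  using x_binary by fastforce

lemma ex1_position:
  assumes "r \<in> {1..R}" and "t \<le> T"
  shows "\<exists>!s. s \<in> S \<and> z r s t = 1"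
  using finite_S z_binary[OF assms(1) _ assms(2)] sum_z_eq_1[OF assms]
  by (rule sum_binary_eq_1_imp_ex1)

abbreviation pos :: "nat \<Rightarrow> nat \<Rightarrow> 's" where
  "pos \<equiv> state_of S z"

lemma pos_in_S: "r \<in> {1..R} \<Longrightarrow> t \<le> T \<Longrightarrow> pos r t \<in> S"
  and z_pos: "r \<in> {1..R} \<Longrightarrow> t \<le> T \<Longrightarrow> z r (pos r t) t = 1"
  using theI'[OF ex1_position] unfolding state_of_def by blast+

lemma z_pos_imp_eq_pos:
  assumes "r \<in> {1..R}" "t \<le> T" "s \<in> S" "0 < z r s t"
  shows "s = pos r t"
proof -
  have "z r s t = 1"
    using z_binary[OF assms(1,3,2)] assms(4) by auto
  then show ?thesis
    using the1_equality[OF ex1_position[OF assms(1,2)]] assms(3) unfolding state_of_def by simp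
qed

lemma x_pos_imp_move:
  assumes r: "r \<in> {1..R}" and e: "(s, s') \<in> mob" and t: "t < T" and x: "0 < x r s s' t"
  shows "s = pos r t" and "s' = pos r (Suc t)"
proof -
  have S: "s \<in> S" "s' \<in> S"
    using e mob_subset by auto
  have fin: "finite (C_plus mob s)" "finite (C_minus mob s')"
    using finite_S mob_subset by (auto simp: C_plus_def C_minus_def intro: finite_subset[of _ S])
  have "x r s s' t \<le> z r s t"
    unfolding z_outflow[OF r S(1) t] using fin e x_nonneg[OF r _ t]
    by (intro member_le_sum) (auto simp: C_plus_def)
  with x show "s = pos r t"
    using z_pos_imp_eq_pos r t S by simp
  have "x r s s' t \<le> z r s' (Suc t)"
    unfolding z_inflow[OF r S(2) t] using fin e x_nonneg[OF r _ t]
    by (intro member_le_sum) (auto simp: C_minus_def)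
  with x show "s' = pos r (Suc t)"
    using z_pos_imp_eq_pos r t S by simp
qed

lemma mobility_path_pos:
  assumes r: "r \<in> {1..R}"
  shows "mobility_path S mob T (pos r)"
  unfolding mobility_path_def
proof (intro conjI allI impI)
  show "pos r t \<in> S" if "t \<le> T" for t
    using pos_in_S r that by blast
  show "(pos r t, pos r (Suc t)) \<in> mob" if t: "t < T" for t
  proof -
    have "0 < (\<Sum>s'\<in>C_plus mob (pos r t). x r (pos r t) s' t)"
      using z_outflow[OF r pos_in_S[OF r less_imp_le[OF t]] t] z_pos[OF r less_imp_le[OF t]] by simp
    then obtain s' where "s' \<in> C_plus mob (pos r t)" and "0 < x r (pos r t) s' t"
      by (rule pos_sum_imp_pos_term)
    then show ?thesis
      using x_pos_imp_move(2)[OF r _ t] by (auto simp: C_plus_def)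
  qed
qed

definition agents_at :: "nat \<Rightarrow> 's set" where
  "agents_at t = {pos r t | r. r \<in> {1..R}}"

definition agent_moves :: "nat \<Rightarrow> ('s \<times> 's) set" where
  "agent_moves t = {(pos r t, pos r (Suc t)) | r. r \<in> {1..R}}"

lemma f_pos_imp_agent_move:
  assumes "j \<in> snk" "(s, s') \<in> mob" "t < T" "0 < f j s s' t"
  shows "(s, s') \<in> agent_moves t" and "s' \<in> agents_at (Suc t)"
proof -
  obtain r where "r \<in> {1..R}" "0 < x r s s' t"
    using assms(4) f_bridge[OF assms(1-3)] by (rule pos_le_mult_sum_imp_pos_term)
  with x_pos_imp_move[OF _ assms(2,3)]
  show "(s, s') \<in> agent_moves t" and "s' \<in> agents_at (Suc t)"
    unfolding agent_moves_def agents_at_def by blast+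
qed

lemma fb_pos_imp_agent_at:
  assumes "j \<in> snk" "(s, s') \<in> com" "t \<le> T" "0 < fb j s s' t"
  shows "s' \<in> agents_at t"
proof -
  obtain r where "r \<in> {1..R}" "0 < z r s' t"
    using assms(4) fb_bridge[OF assms(1-3)] by (rule pos_le_mult_sum_imp_pos_term)
  with z_pos_imp_eq_pos assms(2,3) com_subset show ?thesis
    unfolding agents_at_def by blast
qed

lemma sum_Fnet_info_reachable_nonneg:
  assumes j: "j \<in> snk"
  shows "0 \<le> (\<Sum>t\<le>T. \<Sum>s\<in>S.
    of_bool (info_reachable com agents_at agent_moves u0 t s) * Fnet mob com T (f j) (fb j) s t)"
  using finite_S mob_subset com_subset f_nonneg[OF j] fb_nonneg[OF j]
proof (rule sum_Fnet_closed_set_nonneg)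
  show "info_reachable com agents_at agent_moves u0 (Suc t) v"
    if "info_reachable com agents_at agent_moves u0 t u" "(u, v) \<in> mob" "t < T" "0 < f j u v t"
    for u v t
    using info_reachable_mob_step[OF that(1) f_pos_imp_agent_move[OF j that(2-4)]] .
  show "info_reachable com agents_at agent_moves u0 t v"
    if "info_reachable com agents_at agent_moves u0 t u" "(u, v) \<in> com" "t \<le> T" "0 < fb j u v t"
    for u v t
    using info_reachable_com_step[OF that(1,2) fb_pos_imp_agent_at[OF j that(2-4)]] .
qed

lemma sink_reachable:
  assumes i: "i \<in> src" and j: "j \<in> snk"
  shows "info_reachable com agents_at agent_moves (pos i 0) T (pos j T)"
proof (rule ccontr)
  assume unreached: "\<not> ?thesis"
  have iR: "i \<in> {1..R}" and jR: "j \<in> {1..R}"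
    using i j src_subset snk_subset by auto
  define w where "w s t = of_bool (info_reachable com agents_at agent_moves (pos i 0) t s)
    * Fnet mob com T (f j) (fb j) s t" for s t
  have "0 \<le> (\<Sum>t\<le>T. \<Sum>s\<in>S. w s t)"
    unfolding w_def by (rule sum_Fnet_info_reachable_nonneg[OF j])
  moreover have w_nonpos: "w s t \<le> 0" if s: "s \<in> S" and t: "t \<le> T" for s t
  proof -
    have "0 \<le> (\<Sum>r\<in>src. z r s 0)"
      using src_subset z_nonneg s by (intro sum_nonneg) auto
    moreover have "z j s T = 0" if "info_reachable com agents_at agent_moves (pos i 0) T s"
      using that unreached z_pos_imp_eq_pos[OF jR order_refl s] z_nonneg[OF jR s order_refl]
      by force
    ultimately show ?thesis
      unfolding w_def flow_balance[OF j s t] by (auto simp: mult_le_0_iff)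
  qed
  moreover have "w (pos i 0) 0 \<le> -1"
  proof -
    have "finite src"
      using src_subset finite_subset by blast
    then have "z i (pos i 0) 0 \<le> (\<Sum>r\<in>src. z r (pos i 0) 0)"
      using i src_subset z_nonneg pos_in_S[OF iR le0] by (intro member_le_sum) auto
    moreover have "info_reachable com agents_at agent_moves (pos i 0) 0 (pos i 0)"
      unfolding agents_at_def using iR by (intro info_reachable_start) blast
    ultimately show ?thesis
      unfolding w_def flow_balance[OF j pos_in_S[OF iR le0] le0] using z_pos[OF iR le0] by simp
  qed
  moreover have "(\<Sum>t\<le>T. \<Sum>s\<in>S. w s t) \<le> (\<Sum>s\<in>S. w s 0)"
    using finite_S w_nonpos by (intro sum_le_member_nonpos) (auto intro: sum_nonpos)
  moreover have "(\<Sum>s\<in>S. w s 0) \<le> w (pos i 0) 0"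
    using finite_S w_nonpos pos_in_S[OF iR le0] by (intro sum_le_member_nonpos) auto
  ultimately show False
    by linarith
qed

lemma agent_info_path_exists:
  assumes "i \<in> src" and "j \<in> snk"
  shows "\<exists>ip. agent_info_path S mob com T pos i j ip \<and> valid_info_path R T pos ip"
proof -
  obtain ip where ip: "info_prefix com agents_at agent_moves T ip"
    and start: "hd (ip 0) = pos i 0" and finish: "last (ip T) = pos j T"
    using sink_reachable[OF assms] unfolding info_reachable_def by blast
  have "agents_at t \<subseteq> S" if "t \<le> T" for t
    using pos_in_S that unfolding agents_at_def by blast
  moreover have "agent_moves t \<subseteq> mob" if "t < T" for t
    using mobility_path_pos that unfolding agent_moves_def mobility_path_def by blast
  ultimately have "info_path S mob com T ip"
    by (rule info_prefix_imp_info_path[OF ip])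
  then have "agent_info_path S mob com T pos i j ip"
    unfolding agent_info_path_def using start finish by simp
  moreover have "valid_info_path R T pos ip"
    using ip unfolding valid_info_path_def info_prefix_def agents_at_def agent_moves_def by blast
  ultimately show ?thesis
    by blast
qed

end

theorem mainTheorem3:
  fixes S :: "'s set" and mob com :: "('s \<times> 's) set" and R T N :: nat
    and s0 :: "nat \<Rightarrow> 's" and src snk :: "nat set"
    and z :: "nat \<Rightarrow> 's \<Rightarrow> nat \<Rightarrow> int" and x :: "nat \<Rightarrow> 's \<Rightarrow> 's \<Rightarrow> nat \<Rightarrow> int"
    and f fb :: "nat \<Rightarrow> 's \<Rightarrow> 's \<Rightarrow> nat \<Rightarrow> int"
  assumes "network_wf S mob com R s0 T src snk"
    and "N \<ge> R"
    and "ILP_snk_feasible S mob com R s0 T src snk N z x f fb"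
  shows "(\<forall>r\<in>{1..R}. \<forall>t\<le>T. \<exists>!s. s \<in> S \<and> z r s t = 1)
    \<and> (\<forall>r\<in>{1..R}. mobility_path S mob T (state_of S z r))
    \<and> (\<forall>i\<in>src. \<forall>j\<in>snk. \<exists>ip.
          agent_info_path S mob com T (state_of S z) i j ip
          \<and> valid_info_path R T (state_of S z) ip)"
proof -
  interpret ILP_snk_solution S mob com R T N s0 src snk z x f fb
    using assms(1,3) by unfold_locales
  show ?thesis
    using ex1_position mobility_path_pos agent_info_path_exists by blast
qed

end
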